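(* For every integer $s\ge 2$, there exist mutually unbiased equiangular tight frames $(v_1,\dots,v_k)$ and $(w_1,\dots,w_l)$ for $\mathbb{R}^m$, where $$k=2^{s-1}(2^s-1),\qquad l=2^{s-1}(2^s+1),\qquad m=\frac{2^{2s}-1}{3}.$$
   Context: A system of unit vectors $(v_1,\dots,v_n)$ in $\mathbb{R}^m$ is an equiangular tight frame if $|\langle v_i,v_j\rangle|$ is the same constant for all $i\ne j$ and $VV^\top=\frac{n}{m}\mathrm{I}_m$, where $V$ has columns $v_i$. Two equiangular tight frames $(v_1,\dots,v_k)$, $(w_1,\dots,w_l)$ for $\mathbb{R}^m$ are mutually unbiased if there is $c\in\mathbb{R}$ with $|\langle v_i,w_j\rangle|=c$ for all $i,j$. *)

theory Defs
  imports Complex_Main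
begin

text \<open>Vectors of R^m are represented as functions nat => real, of which only the
coordinates 0..m-1 are used. A frame of n vectors is a function nat => (nat => real),
of which only the indices 0..n-1 are used.\<close>

definition ip :: "nat \<Rightarrow> (nat \<Rightarrow> real) \<Rightarrow> (nat \<Rightarrow> real) \<Rightarrow> real" where
  "ip m x y = (\<Sum>t<m. x t * y t)"

definition is_ETF :: "nat \<Rightarrow> nat \<Rightarrow> (nat \<Rightarrow> nat \<Rightarrow> real) \<Rightarrow> bool" where
  "is_ETF m n v \<longleftrightarrow>
     (\<forall>i<n. ip m (v i) (v i) = 1) \<and>
     (\<exists>c. \<forall>i<n. \<forall>j<n. i \<noteq> j \<longrightarrow> \<bar>ip m (v i) (v j)\<bar> = c) \<and>
     (\<forall>a<m. \<forall>b<m. (\<Sum>i<n. v i a * v i b) = (real n / real m) * (if a = b then 1 else 0))"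

definition mutually_unbiased ::
  "nat \<Rightarrow> nat \<Rightarrow> (nat \<Rightarrow> nat \<Rightarrow> real) \<Rightarrow> nat \<Rightarrow> (nat \<Rightarrow> nat \<Rightarrow> real) \<Rightarrow> bool" where
  "mutually_unbiased m k v l w \<longleftrightarrow>
     is_ETF m k v \<and> is_ETF m l w \<and>
     (\<exists>c. \<forall>i<k. \<forall>j<l. \<bar>ip m (v i) (w j)\<bar> = c)"

end

theory Submission
  imports Defs
begin

text \<open>
  Put \<open>t = 2^s\<close> and \<open>m = (t^2 - 1) / 3\<close>, and index the \<open>N = 4^s = t^2\<close> points by \<open>\<bbbF>\<^sub>2^(2s)\<close>.
  Let \<open>H a b = (-1)^\<omega>(a,b)\<close> for the standard symplectic form \<open>\<omega>\<close> and \<open>Q a = (-1)^q(a)\<close> for a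
  hyperbolic quadratic form \<open>q\<close> polarizing to \<open>\<omega>\<close>. Then \<open>H\<close> is a symmetric Hadamard matrix
  with unit diagonal, \<open>H\<^sup>2 = N I\<close> and \<open>H diag(Q) H = t diag(Q) H diag(Q)\<close>, and \<open>Q = -1\<close>
  exactly \<open>t(t-1)/2\<close> times.

  Let \<open>G\<close> have unit diagonal and off-diagonal entries \<open>H a b \<kappa>(Q a, Q b)\<close>, where
  \<open>\<kappa>(-1,-1) = 1/(t+1)\<close>, \<open>\<kappa>(1,1) = -1/(t-1)\<close> and \<open>\<kappa> = (3/(t^2-1))^(1/2)\<close> on mixed signs.
  The two identities for \<open>H\<close> give \<open>G D G = 3t/(2(t-\<sigma>)) G\<close>, where \<open>D\<close> is the coordinate
  projection onto \<open>{Q = \<sigma>}\<close>. Adding the cases \<open>\<sigma> = \<plusminus>1\<close> yields \<open>G\<^sup>2 = (N/m) G\<close>, so \<open>(m/N) G\<close>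
  is an orthogonal projection of trace \<open>m\<close> and \<open>G\<close> is the Gram matrix of \<open>N\<close> vectors in
  \<open>\<real>^m\<close>. The vectors in the class \<open>Q = \<sigma>\<close> form a tight frame because \<open>G D G\<close> is a multiple
  of \<open>G\<close>; it is equiangular because its Gram entries are \<open>\<plusminus>\<kappa>(\<sigma>,\<sigma>)\<close>, and the two classes
  are mutually unbiased because the entries between them are \<open>\<plusminus>\<kappa>(-1,1)\<close>.
\<close>

section \<open>Orthonormal systems and Gram--Schmidt\<close>

definition orthonormal :: "nat \<Rightarrow> nat \<Rightarrow> (nat \<Rightarrow> nat \<Rightarrow> real) \<Rightarrow> bool" where
  "orthonormal n r e \<longleftrightarrow> (\<forall>i<r. \<forall>j<r. ip n (e i) (e j) = (if i = j then 1 else 0))"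

definition proj :: "nat \<Rightarrow> nat \<Rightarrow> (nat \<Rightarrow> nat \<Rightarrow> real) \<Rightarrow> (nat \<Rightarrow> real) \<Rightarrow> nat \<Rightarrow> real" where
  "proj n r e x = (\<lambda>a. \<Sum>i<r. ip n x (e i) * e i a)"

lemma ip_commute: "ip n x y = ip n y x"
  unfolding ip_def by (simp add: mult.commute)

lemma ip_cong: "(\<And>a. a < n \<Longrightarrow> x a = x' a) \<Longrightarrow> ip n x y = ip n x' y"
  unfolding ip_def by (rule sum.cong) auto

lemma ip_self_nonneg: "ip n x x \<ge> 0"
  unfolding ip_def by (simp add: sum_nonneg)

lemma ip_self_eq_0D: "ip n x x = 0 \<Longrightarrow> a < n \<Longrightarrow> x a = 0"
  unfolding ip_def using sum_nonneg_eq_0_iff[of "{..<n}" "\<lambda>t. x t * x t"] by auto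

lemma ip_lincomb_left:
  "ip n (\<lambda>a. c * x a + d * y a) z = c * ip n x z + d * ip n y z"
  unfolding ip_def by (simp add: sum.distrib sum_distrib_left algebra_simps)

lemma ip_sum_left: "ip n (\<lambda>a. \<Sum>i<r. c i * e i a) y = (\<Sum>i<r. c i * ip n (e i) y)"
  unfolding ip_def by (simp add: sum_distrib_left sum_distrib_right sum.swap[of _ "{..<n}"] ac_simps)

lemma orthonormal_sum_ip:
  assumes "orthonormal n r e" "j < r"
  shows "(\<Sum>i<r. d i * ip n (e i) (e j)) = d j"
proof -
  have "(\<Sum>i<r. d i * ip n (e i) (e j)) = (\<Sum>i<r. if i = j then d i else 0)"
    using assms by (intro sum.cong) (auto simp: orthonormal_def)
  then show ?thesis
    using assms(2) by simp
qed

lemma proj_cong: "(\<And>i. i < r \<Longrightarrow> e' i = e i) \<Longrightarrow> proj n r e' = proj n r e"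
  unfolding proj_def by (intro ext sum.cong) auto

lemma ip_proj_left: "orthonormal n r e \<Longrightarrow> j < r \<Longrightarrow> ip n (proj n r e x) (e j) = ip n x (e j)"
  unfolding proj_def ip_sum_left by (rule orthonormal_sum_ip)

lemma ip_residual_orthogonal:
  assumes "orthonormal n r e" "j < r"
  shows "ip n (\<lambda>a. x a - proj n r e x a) (e j) = 0"
  using ip_lincomb_left[of n 1 x "-1" "proj n r e x" "e j"] ip_proj_left[OF assms] by simp

lemma orthonormal_extend:
  assumes e: "orthonormal n r e" and w: "\<And>i. i < r \<Longrightarrow> ip n (e i) w = 0" "ip n w w \<noteq> 0"
  shows "orthonormal n (Suc r) (e(r := (\<lambda>a. w a / sqrt (ip n w w))))"
proof -
  have "ip n (\<lambda>a. w a / sqrt (ip n w w)) (\<lambda>a. w a / sqrt (ip n w w)) = 1"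
    using w(2) ip_self_nonneg[of n w]
    by (simp add: ip_def sum_divide_distrib[symmetric] real_sqrt_mult[symmetric])
  moreover have "ip n (e i) (\<lambda>a. w a / sqrt (ip n w w)) = 0" if "i < r" for i
    using w(1)[OF that] by (simp add: ip_def sum_divide_distrib[symmetric])
  ultimately show ?thesis
    using e unfolding orthonormal_def by (auto simp: less_Suc_eq ip_commute)
qed

lemma ip_proj_next: "orthonormal n (Suc r) e \<Longrightarrow> ip n (proj n r e x) (e r) = 0"
  by (simp add: proj_def ip_sum_left orthonormal_def)

lemma proj_extend:
  assumes "orthonormal n (Suc r) e" and x: "\<And>a. a < n \<Longrightarrow> x a = proj n r e x a" and "a < n"
  shows "x a = proj n (Suc r) e x a"
proof -
  have "ip n x (e r) = ip n (proj n r e x) (e r)"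
    using x by (rule ip_cong)
  also have "\<dots> = 0"
    using assms(1) by (rule ip_proj_next)
  finally show ?thesis
    using x[OF \<open>a < n\<close>] by (simp add: proj_def)
qed

lemma proj_extend_residual:
  assumes e: "orthonormal n r e" and w: "w = (\<lambda>a. x a - proj n r e x a)" "ip n w w \<noteq> 0"
  shows "x a = proj n (Suc r) (e(r := (\<lambda>a. w a / sqrt (ip n w w)))) x a"
proof -
  define e' where "e' = e(r := (\<lambda>a. w a / sqrt (ip n w w)))"
  have e': "orthonormal n (Suc r) e'"
    unfolding e'_def using e ip_residual_orthogonal[OF e] w
    by (intro orthonormal_extend) (simp_all add: ip_commute)
  have proj_e': "proj n r e' = proj n r e"
    by (rule proj_cong) (simp add: e'_def)
  have "ip n x (e' r) = ip n (\<lambda>a. 1 * w a + 1 * proj n r e' x a) (e' r)"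
    by (simp add: w proj_e')
  also have "\<dots> = ip n w (e' r)"
    by (simp only: ip_lincomb_left ip_proj_next[OF e'])
  also have "\<dots> = sqrt (ip n w w)"
    using w(2) ip_self_nonneg[of n w]
    by (simp add: e'_def ip_def sum_divide_distrib[symmetric] real_div_sqrt)
  finally show ?thesis
    using w by (simp add: proj_def e'_def proj_e'[unfolded proj_def, symmetric])
qed

lemma subspace_residual:
  fixes x :: "nat \<Rightarrow> real" and e :: "nat \<Rightarrow> nat \<Rightarrow> real"
  assumes lin: "\<And>x y c d. V x \<Longrightarrow> V y \<Longrightarrow> V (\<lambda>a. c * x a + d * y a)"
    and "V x" "\<forall>i<r. V (e i)"
  shows "V (\<lambda>a. x a - (\<Sum>i<r. d i * e i a))"
  using assms(3)
proof (induction r)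
  case 0
  then show ?case
    using \<open>V x\<close> by simp
next
  case (Suc r)
  then have "V (\<lambda>a. 1 * (x a - (\<Sum>i<r. d i * e i a)) + (- d r) * e r a)"
    by (intro lin) auto
  then show ?case
    by (simp add: algebra_simps)
qed

lemma gram_schmidt:
  fixes p :: "'b \<Rightarrow> nat \<Rightarrow> real"
  assumes "finite S"
    and lin: "\<And>x y c d. V x \<Longrightarrow> V y \<Longrightarrow> V (\<lambda>a. c * x a + d * y a)"
    and "\<And>b. b \<in> S \<Longrightarrow> V (p b)"
  shows "\<exists>r e. orthonormal n r e \<and> (\<forall>i<r. V (e i)) \<and> (\<forall>b\<in>S. \<forall>a<n. p b a = proj n r e (p b) a)"
  using assms(1,3)
proof (induction S rule: finite_induct)
  case empty
  show ?case
    by (rule exI[of _ 0]) (simp add: orthonormal_def)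
next
  case (insert x S)
  then obtain r e where e: "orthonormal n r e" "\<forall>i<r. V (e i)"
    and exp: "\<forall>b\<in>S. \<forall>a<n. p b a = proj n r e (p b) a"
    by auto
  define w where "w = (\<lambda>a. p x a - proj n r e (p x) a)"
  have "V w"
    unfolding w_def proj_def using insert.prems e(2) by (intro subspace_residual[where V = V, OF lin]) auto
  have w_orth: "ip n (e i) w = 0" if "i < r" for i
    using ip_residual_orthogonal[OF e(1) that, of "p x"] by (simp add: ip_commute w_def)
  show ?case
  proof (cases "ip n w w = 0")
    case True
    then have "\<forall>a<n. p x a = proj n r e (p x) a"
      using ip_self_eq_0D by (fastforce simp: w_def)
    then show ?thesis
      using e exp by blast
  next
    case False
    define e' where "e' = e(r := (\<lambda>a. w a / sqrt (ip n w w)))"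
    have e': "orthonormal n (Suc r) e'"
      unfolding e'_def using e(1) w_orth False by (rule orthonormal_extend)
    have proj_e': "proj n r e' = proj n r e"
      by (rule proj_cong) (simp add: e'_def)
    have "V (e' r)"
      using lin[OF \<open>V w\<close> \<open>V w\<close>, of "1 / sqrt (ip n w w)" 0] by (simp add: e'_def)
    then have "\<forall>i<Suc r. V (e' i)"
      using e(2) by (simp add: e'_def less_Suc_eq)
    moreover have "\<forall>b\<in>S. \<forall>a<n. p b a = proj n (Suc r) e' (p b) a"
      using exp proj_extend[OF e'] proj_e' by metis
    moreover have "p x a = proj n (Suc r) e' (p x) a" for a
      unfolding e'_def by (rule proj_extend_residual[OF e(1) w_def False])
    ultimately show ?thesis
      using e' by blast
  qed
qed

section \<open>Realizing a Gram matrix\<close>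

lemma symmetric_idempotent_decomposition:
  fixes P :: "nat \<Rightarrow> nat \<Rightarrow> real"
  assumes sym: "\<And>a b. a < n \<Longrightarrow> b < n \<Longrightarrow> P a b = P b a"
    and idem: "\<And>a b. a < n \<Longrightarrow> b < n \<Longrightarrow> (\<Sum>c<n. P a c * P c b) = P a b"
    and trace: "(\<Sum>a<n. P a a) = real m"
  obtains e where "orthonormal n m e"
    and "\<And>i a. i < m \<Longrightarrow> a < n \<Longrightarrow> (\<Sum>c<n. P a c * e i c) = e i a"
    and "\<And>a b. a < n \<Longrightarrow> b < n \<Longrightarrow> P a b = (\<Sum>i<m. e i a * e i b)"
proof -
  define V where "V x \<longleftrightarrow> (\<forall>a<n. (\<Sum>c<n. P a c * x c) = x a)" for x :: "nat \<Rightarrow> real"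
  have lin: "V (\<lambda>a. c * x a + d * y a)" if "V x" "V y" for x y c d
    using that by (simp add: V_def distrib_left sum.distrib mult.left_commute flip: sum_distrib_left)
  have "V (\<lambda>a. P a b)" if "b \<in> {..<n}" for b
    using idem that by (simp add: V_def)
  then obtain r e where e: "orthonormal n r e" and "\<forall>i<r. V (e i)"
    and exp: "\<forall>b\<in>{..<n}. \<forall>a<n. P a b = proj n r e (\<lambda>a. P a b) a"
    using gram_schmidt[where V = V and S = "{..<n}" and p = "\<lambda>b a. P a b" and n = n] lin by blast
  then have fixed: "(\<Sum>c<n. P a c * e i c) = e i a" if "i < r" "a < n" for i a
    using that by (simp add: V_def)
  have P_eq: "P a b = (\<Sum>i<r. e i a * e i b)" if "a < n" "b < n" for a b
  proof -
    have "ip n (\<lambda>c. P c b) (e i) = e i b" if "i < r" for i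
      using fixed[OF that \<open>b < n\<close>] sym[OF _ \<open>b < n\<close>] by (simp add: ip_def)
    then show ?thesis
      using exp \<open>a < n\<close> \<open>b < n\<close> by (simp add: proj_def mult.commute)
  qed
  have "real m = (\<Sum>i<r. ip n (e i) (e i))"
    using trace P_eq by (simp add: ip_def sum.swap[of _ "{..<n}"])
  also have "\<dots> = real r"
    using e by (simp add: orthonormal_def)
  finally have "m = r"
    by simp
  then show ?thesis
    using that e fixed P_eq by blast
qed

lemma orthonormal_weighted_ip:
  fixes P :: "nat \<Rightarrow> nat \<Rightarrow> real"
  assumes sym: "\<And>a b. a < n \<Longrightarrow> b < n \<Longrightarrow> P a b = P b a"
    and e: "orthonormal n m e"
    and fixed: "\<And>i a. i < m \<Longrightarrow> a < n \<Longrightarrow> (\<Sum>c<n. P a c * e i c) = e i a"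
    and weighted: "\<And>a b. a < n \<Longrightarrow> b < n \<Longrightarrow> (\<Sum>c<n. P a c * w c * P c b) = \<mu> * P a b"
    and "i < m" "j < m"
  shows "(\<Sum>a<n. w a * e i a * e j a) = \<mu> * (if i = j then 1 else 0)"
proof -
  have fixed': "(\<Sum>c<n. e i c * P c a) = e i a" if "a < n" for a
    using fixed[OF \<open>i < m\<close> that] sym[OF _ that] by (simp add: mult.commute)
  have "(\<Sum>a<n. w a * e i a * e j a)
      = (\<Sum>a<n. w a * (\<Sum>c<n. e i c * P c a) * (\<Sum>d<n. P a d * e j d))"
    using fixed' fixed[OF \<open>j < m\<close>] by simp
  also have "\<dots> = (\<Sum>a<n. \<Sum>c<n. \<Sum>d<n. e i c * e j d * (P c a * w a * P a d))"
    by (intro sum.cong refl) (simp add: sum_distrib_left sum_distrib_right ac_simps)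
  also have "\<dots> = (\<Sum>c<n. \<Sum>d<n. \<Sum>a<n. e i c * e j d * (P c a * w a * P a d))"
    by (subst sum.swap) (intro sum.cong refl sum.swap)
  also have "\<dots> = (\<Sum>c<n. \<Sum>d<n. e i c * e j d * (\<Sum>a<n. P c a * w a * P a d))"
    by (simp add: sum_distrib_left)
  also have "\<dots> = \<mu> * (\<Sum>c<n. e i c * (\<Sum>d<n. P c d * e j d))"
    using weighted by (simp add: sum_distrib_left ac_simps)
  also have "\<dots> = \<mu> * ip n (e i) (e j)"
    using fixed[OF \<open>j < m\<close>] by (simp add: ip_def)
  finally show ?thesis
    using e \<open>i < m\<close> \<open>j < m\<close> by (simp add: orthonormal_def)
qed

lemma gram_realization:
  fixes G :: "nat \<Rightarrow> nat \<Rightarrow> real"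
  assumes sym: "\<And>a b. a < n \<Longrightarrow> b < n \<Longrightarrow> G a b = G b a"
    and square: "\<And>a b. a < n \<Longrightarrow> b < n \<Longrightarrow> (\<Sum>c<n. G a c * G c b) = \<mu> * G a b"
    and "\<mu> > 0"
    and trace: "(\<Sum>a<n. G a a) = \<mu> * real m"
  obtains u where "\<And>a b. a < n \<Longrightarrow> b < n \<Longrightarrow> ip m (u a) (u b) = G a b"
    and "\<And>w \<nu> p q. (\<And>a b. a < n \<Longrightarrow> b < n \<Longrightarrow> (\<Sum>c<n. G a c * w c * G c b) = \<nu> * G a b) \<Longrightarrow>
           p < m \<Longrightarrow> q < m \<Longrightarrow> (\<Sum>a<n. w a * u a p * u a q) = \<nu> * (if p = q then 1 else 0)"
proof -
  define P where "P a b = G a b / \<mu>" for a b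
  have "(\<Sum>c<n. P a c * P c b) = P a b" if "a < n" "b < n" for a b
    using square[OF that] \<open>\<mu> > 0\<close>
    by (simp add: P_def sum_divide_distrib[symmetric] power2_eq_square)
  moreover have "(\<Sum>a<n. P a a) = real m"
    using trace \<open>\<mu> > 0\<close> by (simp add: P_def sum_divide_distrib[symmetric])
  ultimately obtain e where e: "orthonormal n m e"
    and fixed: "\<And>i a. i < m \<Longrightarrow> a < n \<Longrightarrow> (\<Sum>c<n. P a c * e i c) = e i a"
    and P_eq: "\<And>a b. a < n \<Longrightarrow> b < n \<Longrightarrow> P a b = (\<Sum>i<m. e i a * e i b)"
    using symmetric_idempotent_decomposition[of n P m] sym by (auto simp: P_def)
  define u where "u a i = sqrt \<mu> * e i a" for a i
  have u_mult: "u a i * u b j = \<mu> * (e i a * e j b)" for a b i j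
    using \<open>\<mu> > 0\<close> by (simp add: u_def algebra_simps flip: real_sqrt_mult)
  show ?thesis
  proof
    show "ip m (u a) (u b) = G a b" if "a < n" "b < n" for a b
      using P_eq[OF that, symmetric] \<open>\<mu> > 0\<close> by (simp add: ip_def u_mult P_def flip: sum_distrib_left)
  next
    fix w \<nu> p q
    assume weighted: "\<And>a b. a < n \<Longrightarrow> b < n \<Longrightarrow> (\<Sum>c<n. G a c * w c * G c b) = \<nu> * G a b"
      and "p < m" "q < m"
    have "(\<Sum>c<n. P a c * w c * P c b) = \<nu> / \<mu> * P a b" if "a < n" "b < n" for a b
      using weighted[OF that] \<open>\<mu> > 0\<close>
      by (simp add: P_def sum_divide_distrib[symmetric] power2_eq_square)
    then have "(\<Sum>a<n. w a * e p a * e q a) = \<nu> / \<mu> * (if p = q then 1 else 0)"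
      using orthonormal_weighted_ip[of n P m e w "\<nu> / \<mu>" p q] sym e fixed \<open>p < m\<close> \<open>q < m\<close>
      by (simp add: P_def)
    then show "(\<Sum>a<n. w a * u a p * u a q) = \<nu> * (if p = q then 1 else 0)"
      using \<open>\<mu> > 0\<close> by (simp add: mult.assoc u_mult sum_distrib_left[symmetric] ac_simps)
  qed
qed

lemma weighted_square_diag_plus:
  fixes G K :: "nat \<Rightarrow> nat \<Rightarrow> real" and D w :: "nat \<Rightarrow> real"
  assumes "\<And>c d. G c d = (if c = d then D c else 0) + K c d" "a < n" "b < n"
  shows "(\<Sum>c<n. G a c * w c * G c b)
    = (if a = b then D a * D a * w a else 0) + D a * w a * K a b + K a b * w b * D b
      + (\<Sum>c<n. K a c * w c * K c b)"
proof -
  have "G a c * w c * G c b = (if c = a then D a * w a * (if a = b then D b else 0) else 0)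
      + (if c = a then D a * w a * K a b else 0) + (if c = b then K a b * w b * D b else 0)
      + K a c * w c * K c b" for c
    by (cases "c = a"; cases "c = b") (simp_all add: assms(1) algebra_simps)
  then show ?thesis
    using assms(2,3) by (simp add: sum.distrib)
qed

lemma is_ETF_reindex:
  assumes f: "bij_betw f {..<k} S"
    and unit: "\<And>a. a \<in> S \<Longrightarrow> ip m (u a) (u a) = 1"
    and equiangular: "\<And>a b. a \<in> S \<Longrightarrow> b \<in> S \<Longrightarrow> a \<noteq> b \<Longrightarrow> \<bar>ip m (u a) (u b)\<bar> = c"
    and tight: "\<And>p q. p < m \<Longrightarrow> q < m \<Longrightarrow>
      (\<Sum>a\<in>S. u a p * u a q) = real k / real m * (if p = q then 1 else 0)"
  shows "is_ETF m k (\<lambda>i. u (f i))"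
proof -
  have "f i \<in> S" if "i < k" for i
    using f that by (auto simp: bij_betw_def)
  moreover have "f i \<noteq> f j" if "i < k" "j < k" "i \<noteq> j" for i j
    using f that by (auto simp: bij_betw_def inj_on_def)
  moreover have "(\<Sum>i<k. u (f i) p * u (f i) q) = (\<Sum>a\<in>S. u a p * u a q)" for p q
    using sum.reindex_bij_betw[OF f, of "\<lambda>a. u a p * u a q"] by simp
  ultimately show ?thesis
    unfolding is_ETF_def using unit equiangular tight by (intro conjI exI[of _ c]) auto
qed

section \<open>A symmetric Hadamard matrix and a quadratic sign vector\<close>

lemma sum_mod_div_product:
  fixes f g :: "nat \<Rightarrow> 'a::comm_semiring_1"
  shows "(\<Sum>c<n * k. f (c mod k) * g (c div k)) = (\<Sum>d<k. f d) * (\<Sum>c<n. g c)"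
proof (cases "k = 0")
  case False
  have block: "(\<Sum>c\<in>{m * k..<m * k + k}. f (c mod k) * g (c div k)) = (\<Sum>d<k. f d * g m)" for m
    using sum.shift_bounds_nat_ivl[of "\<lambda>c. f (c mod k) * g (c div k)" 0 "m * k" k] False
    by (simp add: atLeast0LessThan add.commute)
  have "(\<Sum>c<n * k. f (c mod k) * g (c div k)) = (\<Sum>m<n. \<Sum>d<k. f d * g m)"
    by (simp add: sum.nat_group[symmetric] block)
  then show ?thesis by (simp add: sum_distrib_left sum_distrib_right mult.commute)
qed simp

text \<open>A base-4 digit \<open>d\<close> stands for \<open>(d mod 2, d div 2) \<in> \<bbbF>\<^sub>2\<^sup>2\<close>: \<open>H4\<close> is \<open>-1\<close> to the symplectic
  form and \<open>Q4\<close> is \<open>-1\<close> to the quadratic form \<open>x\<^sub>1 x\<^sub>2\<close>; \<open>hadamard\<close> and \<open>qsign\<close> are their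
  tensor powers over the digits.\<close>

definition H4 :: "nat \<Rightarrow> nat \<Rightarrow> real" where
  "H4 d e = (-1) ^ (d mod 2 * (e div 2) + d div 2 * (e mod 2))"

definition Q4 :: "nat \<Rightarrow> real" where
  "Q4 d = (-1) ^ (d mod 2 * (d div 2))"

lemma less_4_cases: "d < (4::nat) \<Longrightarrow> d = 0 \<or> d = 1 \<or> d = 2 \<or> d = 3"
  by auto

lemma sum_lessThan_4: "(\<Sum>d<(4::nat). f d) = f 0 + f 1 + f 2 + (f 3 :: real)"
  by (simp add: eval_nat_numeral)

lemma H4_square: "d < 4 \<Longrightarrow> e < 4 \<Longrightarrow> (\<Sum>c<4. H4 d c * H4 c e) = (if d = e then 4 else 0)"
  using less_4_cases[of d] less_4_cases[of e] by (auto simp: sum_lessThan_4 H4_def)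

lemma H4_Q4_H4: "d < 4 \<Longrightarrow> e < 4 \<Longrightarrow> (\<Sum>c<4. H4 d c * Q4 c * H4 c e) = 2 * Q4 d * Q4 e * H4 d e"
  using less_4_cases[of d] less_4_cases[of e] by (auto simp: sum_lessThan_4 H4_def Q4_def)

lemma sum_Q4: "(\<Sum>d<4. Q4 d) = 2"
  by (simp add: sum_lessThan_4 Q4_def)

fun hadamard :: "nat \<Rightarrow> nat \<Rightarrow> nat \<Rightarrow> real" where
  "hadamard 0 a b = 1"
| "hadamard (Suc s) a b = H4 (a mod 4) (b mod 4) * hadamard s (a div 4) (b div 4)"

fun qsign :: "nat \<Rightarrow> nat \<Rightarrow> real" where
  "qsign 0 a = 1"
| "qsign (Suc s) a = Q4 (a mod 4) * qsign s (a div 4)"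

lemma hadamard_commute: "hadamard s a b = hadamard s b a"
  by (induction s arbitrary: a b) (simp_all add: H4_def mult.commute add.commute)

lemma hadamard_diag [simp]: "hadamard s a a = 1"
  by (induction s arbitrary: a) (simp_all add: H4_def mult.commute)

lemma hadamard_sign: "hadamard s a b = 1 \<or> hadamard s a b = -1"
  by (induction s arbitrary: a b) (auto simp: H4_def minus_one_power_iff)

lemma abs_hadamard [simp]: "\<bar>hadamard s a b\<bar> = 1"
  using hadamard_sign[of s a b] by auto

lemma qsign_sign: "qsign s a = 1 \<or> qsign s a = -1"
  by (induction s arbitrary: a) (auto simp: Q4_def minus_one_power_iff)

lemma sum_lessThan_power_4:
  fixes f g :: "nat \<Rightarrow> real"
  shows "(\<Sum>c<4 ^ Suc s. f (c mod 4) * g (c div 4)) = (\<Sum>d<4. f d) * (\<Sum>c<4 ^ s. g c)"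
  using sum_mod_div_product[where n = "4 ^ s" and k = 4 and f = f and g = g] by (simp add: mult.commute)

lemma hadamard_square:
  "a < 4 ^ s \<Longrightarrow> b < 4 ^ s \<Longrightarrow>
    (\<Sum>c<4 ^ s. hadamard s a c * hadamard s c b) = (if a = b then 4 ^ s else 0)"
proof (induction s arbitrary: a b)
  case (Suc s)
  have "(\<Sum>c<4 ^ Suc s. hadamard (Suc s) a c * hadamard (Suc s) c b)
      = (\<Sum>d<4. H4 (a mod 4) d * H4 d (b mod 4))
        * (\<Sum>c<4 ^ s. hadamard s (a div 4) c * hadamard s c (b div 4))"
    by (simp only: sum_lessThan_power_4[symmetric] hadamard.simps ac_simps)
  also have "\<dots> = (if a mod 4 = b mod 4 then 4 else 0) * (if a div 4 = b div 4 then 4 ^ s else 0)"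
    using Suc by (simp add: H4_square less_mult_imp_div_less)
  also have "\<dots> = (if a = b then 4 ^ Suc s else 0)"
    by (auto simp: mult.commute) (metis div_mult_mod_eq)
  finally show ?case .
qed simp

lemma hadamard_qsign_hadamard:
  "(\<Sum>c<4 ^ s. hadamard s a c * qsign s c * hadamard s c b)
    = 2 ^ s * qsign s a * qsign s b * hadamard s a b"
proof (induction s arbitrary: a b)
  case (Suc s)
  have "(\<Sum>c<4 ^ Suc s. hadamard (Suc s) a c * qsign (Suc s) c * hadamard (Suc s) c b)
      = (\<Sum>d<4. H4 (a mod 4) d * Q4 d * H4 d (b mod 4))
        * (\<Sum>c<4 ^ s. hadamard s (a div 4) c * qsign s c * hadamard s c (b div 4))"
    by (simp only: sum_lessThan_power_4[symmetric] hadamard.simps qsign.simps ac_simps)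
  then show ?case
    by (simp add: Suc.IH H4_Q4_H4)
qed simp

lemma sum_qsign: "(\<Sum>c<4 ^ s. qsign s c) = 2 ^ s"
proof (induction s)
  case (Suc s)
  show ?case
    using sum_lessThan_power_4[of Q4 "qsign s" s] by (simp add: Suc.IH sum_Q4)
qed simp

lemma qsign_indicator:
  "\<sigma> = 1 \<or> \<sigma> = -1 \<Longrightarrow> (if qsign s c = \<sigma> then 1 else 0) = (1 + \<sigma> * qsign s c) / 2"
  using qsign_sign[of s c] by auto

lemma hadamard_indicator_hadamard:
  assumes "\<sigma> = 1 \<or> \<sigma> = -1" "a < 4 ^ s" "b < 4 ^ s"
  shows "(\<Sum>c<4 ^ s. hadamard s a c * (if qsign s c = \<sigma> then 1 else 0) * hadamard s c b)
    = (4 ^ s * (if a = b then 1 else 0) + \<sigma> * 2 ^ s * qsign s a * qsign s b * hadamard s a b) / 2"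
proof -
  have "(\<Sum>c<4 ^ s. hadamard s a c * (if qsign s c = \<sigma> then 1 else 0) * hadamard s c b)
      = ((\<Sum>c<4 ^ s. hadamard s a c * hadamard s c b)
        + \<sigma> * (\<Sum>c<4 ^ s. hadamard s a c * qsign s c * hadamard s c b)) / 2"
    by (simp add: qsign_indicator[OF assms(1)] sum.distrib sum_distrib_left algebra_simps
        flip: sum_divide_distrib)
  then show ?thesis
    by (simp add: hadamard_square[OF assms(2,3)] hadamard_qsign_hadamard)
qed

lemma sum_qsign_part:
  "(\<Sum>a\<in>{a. a < 4 ^ s \<and> qsign s a = \<sigma>}. f a) = (\<Sum>a<4 ^ s. (if qsign s a = \<sigma> then 1 else 0) * f a :: real)"
proof -
  have "(\<Sum>a<4 ^ s. (if qsign s a = \<sigma> then 1 else 0) * f a)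
      = (\<Sum>a<4 ^ s. if a \<in> {a. qsign s a = \<sigma>} then f a else 0)"
    by (rule sum.cong) auto
  also have "\<dots> = sum f ({..<4 ^ s} \<inter> {a. qsign s a = \<sigma>})"
    by (simp add: sum.inter_restrict)
  also have "{..<4 ^ s} \<inter> {a. qsign s a = \<sigma>} = {a. a < 4 ^ s \<and> qsign s a = \<sigma>}"
    by auto
  finally show ?thesis ..
qed

lemma card_qsign_part:
  assumes "\<sigma> = 1 \<or> \<sigma> = -1"
  shows "real (card {a. a < 4 ^ s \<and> qsign s a = \<sigma>}) = (4 ^ s + \<sigma> * 2 ^ s) / 2"
proof -
  have "real (card {a. a < 4 ^ s \<and> qsign s a = \<sigma>}) = (\<Sum>a<4 ^ s. (1 + \<sigma> * qsign s a) / 2)"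
    using sum_qsign_part[where f = "\<lambda>_. 1"] by (simp add: qsign_indicator[OF assms])
  also have "\<dots> = (4 ^ s + \<sigma> * 2 ^ s) / 2"
    by (simp add: sum.distrib sum_qsign add_divide_distrib flip: sum_distrib_left sum_divide_distrib)
  finally show ?thesis .
qed

lemma card_qsign_parts:
  assumes "s \<ge> 1"
  shows "card {a. a < 4 ^ s \<and> qsign s a = -1} = 2 ^ (s - 1) * (2 ^ s - 1)"
    and "card {a. a < 4 ^ s \<and> qsign s a = 1} = 2 ^ (s - 1) * (2 ^ s + 1)"
proof -
  have two: "(2 :: real) ^ s = 2 * 2 ^ (s - 1)"
    using assms by (simp flip: power_Suc)
  have four: "(4 :: real) ^ s = 2 ^ s * 2 ^ s"
    by (simp flip: power_mult_distrib)
  have "real (card {a. a < 4 ^ s \<and> qsign s a = -1}) = real (2 ^ (s - 1) * (2 ^ s - 1))"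
    using card_qsign_part[of "-1" s] by (simp add: four of_nat_diff) (simp add: two algebra_simps)
  then show "card {a. a < 4 ^ s \<and> qsign s a = -1} = 2 ^ (s - 1) * (2 ^ s - 1)"
    by (simp only: of_nat_eq_iff)
  have "real (card {a. a < 4 ^ s \<and> qsign s a = 1}) = real (2 ^ (s - 1) * (2 ^ s + 1))"
    using card_qsign_part[of 1 s] by (simp add: four) (simp add: two algebra_simps)
  then show "card {a. a < 4 ^ s \<and> qsign s a = 1} = 2 ^ (s - 1) * (2 ^ s + 1)"
    by (simp only: of_nat_eq_iff)
qed

section \<open>The Gram matrix\<close>

definition kappa :: "real \<Rightarrow> real \<Rightarrow> real \<Rightarrow> real" where
  "kappa t x y = (if x = y then - x / (t - x) else 1 / sqrt ((t\<^sup>2 - 1) / 3))"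

lemma kappa_normal_form:
  assumes "t \<ge> 2"
  obtains \<alpha> \<beta> \<gamma> where "\<alpha> * (t + 1) = 1" "\<beta> * (t - 1) = 1" "\<gamma> * \<gamma> = 3 * \<alpha> * \<beta>"
    and "\<And>x y. x = 1 \<or> x = -1 \<Longrightarrow> kappa t x y = (if x \<noteq> y then \<gamma> else if x = 1 then - \<beta> else \<alpha>)"
    and "\<And>\<sigma>. \<sigma> = 1 \<or> \<sigma> = -1 \<Longrightarrow> 3 * t / (2 * (t - \<sigma>)) = 3 * t * (if \<sigma> = 1 then \<beta> else \<alpha>) / 2"
proof (rule that)
  have "t\<^sup>2 > 1"
    using assms by (intro one_less_power) auto
  then show "1 / sqrt ((t\<^sup>2 - 1) / 3) * (1 / sqrt ((t\<^sup>2 - 1) / 3)) = 3 * (1 / (t + 1)) * (1 / (t - 1))"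
    by (simp add: real_sqrt_mult[symmetric] power2_eq_square field_simps)
  show "kappa t x y = (if x \<noteq> y then 1 / sqrt ((t\<^sup>2 - 1) / 3) else if x = 1 then - (1 / (t - 1)) else 1 / (t + 1))"
    if "x = 1 \<or> x = -1" for x y
    using that by (auto simp: kappa_def)
  show "3 * t / (2 * (t - \<sigma>)) = 3 * t * (if \<sigma> = 1 then 1 / (t - 1) else 1 / (t + 1)) / 2"
    if "\<sigma> = 1 \<or> \<sigma> = -1" for \<sigma>
    using that assms by (auto simp: field_simps)
qed (use assms in auto)

lemma kappa_diag_identity:
  assumes "t \<ge> 2" "x = 1 \<or> x = -1" "\<sigma> = 1 \<or> \<sigma> = -1"
  shows "(1 - (kappa t x x)\<^sup>2) * (if x = \<sigma> then 1 else 0)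
      + kappa t x \<sigma> * kappa t \<sigma> x * (t\<^sup>2 + \<sigma> * t) / 2 = 3 * t / (2 * (t - \<sigma>))"
proof -
  obtain \<alpha> \<beta> \<gamma> where rel: "\<alpha> * (t + 1) = 1" "\<beta> * (t - 1) = 1" "\<gamma> * \<gamma> = 3 * \<alpha> * \<beta>"
    and kappa: "\<And>x y. x = 1 \<or> x = -1 \<Longrightarrow> kappa t x y = (if x \<noteq> y then \<gamma> else if x = 1 then - \<beta> else \<alpha>)"
    and frac: "\<And>\<sigma>. \<sigma> = 1 \<or> \<sigma> = -1 \<Longrightarrow> 3 * t / (2 * (t - \<sigma>)) = 3 * t * (if \<sigma> = 1 then \<beta> else \<alpha>) / 2"
    using kappa_normal_form[OF assms(1)] by blast
  from assms(2,3) show ?thesis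
    unfolding frac[OF assms(3)]
    by (elim disjE) (simp_all add: kappa rel power2_eq_square field_simps, (use rel in algebra)+)
qed

lemma kappa_offdiag_identity:
  assumes "t \<ge> 2" "x = 1 \<or> x = -1" "y = 1 \<or> y = -1" "\<sigma> = 1 \<or> \<sigma> = -1"
  shows "kappa t x y * ((if x = \<sigma> then 1 - kappa t x x else 0) + (if y = \<sigma> then 1 - kappa t y y else 0))
      + kappa t x \<sigma> * kappa t \<sigma> y * \<sigma> * t * x * y / 2 = 3 * t / (2 * (t - \<sigma>)) * kappa t x y"
proof -
  obtain \<alpha> \<beta> \<gamma> where rel: "\<alpha> * (t + 1) = 1" "\<beta> * (t - 1) = 1" "\<gamma> * \<gamma> = 3 * \<alpha> * \<beta>"
    and kappa: "\<And>x y. x = 1 \<or> x = -1 \<Longrightarrow> kappa t x y = (if x \<noteq> y then \<gamma> else if x = 1 then - \<beta> else \<alpha>)"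
    and frac: "\<And>\<sigma>. \<sigma> = 1 \<or> \<sigma> = -1 \<Longrightarrow> 3 * t / (2 * (t - \<sigma>)) = 3 * t * (if \<sigma> = 1 then \<beta> else \<alpha>) / 2"
    using kappa_normal_form[OF assms(1)] by blast
  from assms(2-4) show ?thesis
    unfolding frac[OF assms(4)]
    by (elim disjE) (simp_all add: kappa rel field_simps, (use rel in algebra)+)
qed

definition gram :: "nat \<Rightarrow> nat \<Rightarrow> nat \<Rightarrow> real" where
  "gram s a b = (if a = b then 1 else hadamard s a b * kappa (2 ^ s) (qsign s a) (qsign s b))"

lemma gram_diag [simp]: "gram s a a = 1"
  by (simp add: gram_def)

lemma gram_commute: "gram s a b = gram s b a"
  unfolding gram_def kappa_def by (auto simp: hadamard_commute)

lemma abs_gram: "a \<noteq> b \<Longrightarrow> \<bar>gram s a b\<bar> = \<bar>kappa (2 ^ s) (qsign s a) (qsign s b)\<bar>"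
  by (simp add: gram_def abs_mult)

lemma hadamard_kappa_weighted_square:
  assumes "\<sigma> = 1 \<or> \<sigma> = -1" "a < 4 ^ s" "b < 4 ^ s"
  shows "(\<Sum>c<4 ^ s. hadamard s a c * kappa t (qsign s a) (qsign s c) * (if qsign s c = \<sigma> then 1 else 0)
        * (hadamard s c b * kappa t (qsign s c) (qsign s b)))
    = kappa t (qsign s a) \<sigma> * kappa t \<sigma> (qsign s b)
      * (4 ^ s * (if a = b then 1 else 0) + \<sigma> * 2 ^ s * qsign s a * qsign s b * hadamard s a b) / 2"
proof -
  have "hadamard s a c * kappa t (qsign s a) (qsign s c) * (if qsign s c = \<sigma> then 1 else 0)
        * (hadamard s c b * kappa t (qsign s c) (qsign s b))
      = kappa t (qsign s a) \<sigma> * kappa t \<sigma> (qsign s b)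
        * (hadamard s a c * (if qsign s c = \<sigma> then 1 else 0) * hadamard s c b)" for c
    by simp
  then have "(\<Sum>c<4 ^ s. hadamard s a c * kappa t (qsign s a) (qsign s c) * (if qsign s c = \<sigma> then 1 else 0)
        * (hadamard s c b * kappa t (qsign s c) (qsign s b)))
      = kappa t (qsign s a) \<sigma> * kappa t \<sigma> (qsign s b)
        * (\<Sum>c<4 ^ s. hadamard s a c * (if qsign s c = \<sigma> then 1 else 0) * hadamard s c b)"
    by (simp only: sum_distrib_left)
  then show ?thesis
    by (simp add: hadamard_indicator_hadamard[OF assms])
qed

lemma gram_weighted_square:
  assumes "s \<ge> 1" "\<sigma> = 1 \<or> \<sigma> = -1" "a < 4 ^ s" "b < 4 ^ s"
  shows "(\<Sum>c<4 ^ s. gram s a c * (if qsign s c = \<sigma> then 1 else 0) * gram s c b)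
    = 3 * 2 ^ s / (2 * (2 ^ s - \<sigma>)) * gram s a b"
proof -
  define t :: real where "t = 2 ^ s"
  define w where "w c = (if qsign s c = \<sigma> then 1 else 0 :: real)" for c
  define D where "D c = 1 - kappa t (qsign s c) (qsign s c)" for c
  define K where "K c d = hadamard s c d * kappa t (qsign s c) (qsign s d)" for c d
  have "t \<ge> 2"
    using power_increasing[OF assms(1), of "2 :: real"] by (simp add: t_def)
  have unit_sq: "\<sigma> * (\<sigma> * z) = z" "qsign s c * (qsign s c * z) = z" for c z
    using assms(2) qsign_sign[of s c] by auto
  have gram_DK: "gram s c d = (if c = d then D c else 0) + K c d" for c d
    by (simp add: gram_def D_def K_def t_def)
  have KwK: "(\<Sum>c<4 ^ s. K a c * w c * K c b) = kappa t (qsign s a) \<sigma> * kappa t \<sigma> (qsign s b)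
      * (t\<^sup>2 * (if a = b then 1 else 0) + \<sigma> * t * qsign s a * qsign s b * hadamard s a b) / 2"
    using hadamard_kappa_weighted_square[OF assms(2-4), of t]
    by (simp add: K_def w_def t_def power2_eq_square flip: power_mult_distrib)
  have "(\<Sum>c<4 ^ s. gram s a c * w c * gram s c b)
      = (if a = b then D a * D a * w a else 0) + D a * w a * K a b + K a b * w b * D b
        + (\<Sum>c<4 ^ s. K a c * w c * K c b)"
    using weighted_square_diag_plus[of "gram s" D K, OF gram_DK] assms(3,4) by simp
  also have "\<dots> = 3 * t / (2 * (t - \<sigma>)) * gram s a b"
  proof (cases "a = b")
    case True
    then show ?thesis
      unfolding KwK using kappa_diag_identity[OF \<open>t \<ge> 2\<close> qsign_sign assms(2), of s a]
      by (simp add: gram_DK D_def K_def w_def power2_eq_square algebra_simps unit_sq)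
  next
    case False
    let ?x = "qsign s a" and ?y = "qsign s b"
    have "D a * w a * K a b + K a b * w b * D b + kappa t ?x \<sigma> * kappa t \<sigma> ?y
          * (t\<^sup>2 * (if a = b then 1 else 0) + \<sigma> * t * ?x * ?y * hadamard s a b) / 2
        = hadamard s a b * (kappa t ?x ?y * ((if ?x = \<sigma> then 1 - kappa t ?x ?x else 0)
          + (if ?y = \<sigma> then 1 - kappa t ?y ?y else 0)) + kappa t ?x \<sigma> * kappa t \<sigma> ?y * \<sigma> * t * ?x * ?y / 2)"
      using False by (simp add: D_def K_def w_def algebra_simps)
    also have "\<dots> = 3 * t / (2 * (t - \<sigma>)) * gram s a b"
      using False by (simp add: kappa_offdiag_identity[OF \<open>t \<ge> 2\<close> qsign_sign qsign_sign assms(2)]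
          gram_DK K_def)
    finally show ?thesis
      using False by (simp add: KwK)
  qed
  finally show ?thesis
    by (simp add: w_def t_def)
qed

lemma gram_square:
  assumes "s \<ge> 1" "a < 4 ^ s" "b < 4 ^ s"
  shows "(\<Sum>c<4 ^ s. gram s a c * gram s c b)
    = (3 * 2 ^ s / (2 * (2 ^ s - 1)) + 3 * 2 ^ s / (2 * (2 ^ s + 1))) * gram s a b"
proof -
  have "gram s a c * gram s c b = gram s a c * (if qsign s c = 1 then 1 else 0) * gram s c b
      + gram s a c * (if qsign s c = -1 then 1 else 0) * gram s c b" for c
    using qsign_sign[of s c] by auto
  then show ?thesis
    using gram_weighted_square[OF assms(1) _ assms(2,3), of 1] gram_weighted_square[OF assms(1) _ assms(2,3), of "-1"]
    by (simp add: sum.distrib algebra_simps)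
qed

section \<open>The two frames\<close>

lemma three_mul_div_three_add_one: "3 * ((2 ^ (2 * s) - 1) div 3) + 1 = (4 :: nat) ^ s"
proof -
  have "(4 :: nat) ^ s mod 3 = 1"
    using power_mod[of "4 :: nat" 3 s] by simp
  then obtain k where "(4 :: nat) ^ s = 3 * k + 1"
    using div_mult_mod_eq[of "4 ^ s" "3 :: nat"] by (metis mult.commute)
  moreover have "(2 :: nat) ^ (2 * s) = 4 ^ s"
    by (simp add: power_mult)
  ultimately show ?thesis
    by simp
qed

lemma qsign_part_ratio:
  assumes "s \<ge> 1" and m: "3 * m + 1 = 4 ^ s" and \<sigma>: "\<sigma> = 1 \<or> \<sigma> = -1"
  shows "3 * 2 ^ s / (2 * (2 ^ s - \<sigma>)) = real (card {a. a < 4 ^ s \<and> qsign s a = \<sigma>}) / real m"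
proof -
  define t :: real where "t = 2 ^ s"
  have "t \<ge> 2"
    using power_increasing[OF assms(1), of "2 :: real"] by (simp add: t_def)
  have four_pow: "4 ^ s = t\<^sup>2"
    by (simp add: t_def power2_eq_square flip: power_mult_distrib)
  have card: "real (card {a. a < 4 ^ s \<and> qsign s a = \<sigma>}) = t * (t + \<sigma>) / 2"
    using card_qsign_part[OF \<sigma>, of s] by (simp add: four_pow t_def power2_eq_square algebra_simps)
  have "real m = (t\<^sup>2 - 1) / 3"
    using arg_cong[OF m, of real] by (simp add: four_pow)
  then have m_factor: "real m = (t - \<sigma>) * (t + \<sigma>) / 3"
    using \<sigma> by (auto simp: power2_eq_square field_simps)
  have "t - \<sigma> > 0" "t + \<sigma> > 0"
    using \<sigma> \<open>t \<ge> 2\<close> by auto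
  then show ?thesis
    unfolding card m_factor t_def[symmetric] by (simp add: divide_simps)
qed

lemma qsign_gram_realization:
  assumes "s \<ge> 1" and "3 * m + 1 = 4 ^ s"
  obtains u where "\<And>a b. a < 4 ^ s \<Longrightarrow> b < 4 ^ s \<Longrightarrow> ip m (u a) (u b) = gram s a b"
    and "\<And>\<sigma> p q. \<sigma> = 1 \<or> \<sigma> = -1 \<Longrightarrow> p < m \<Longrightarrow> q < m \<Longrightarrow>
      (\<Sum>a\<in>{a. a < 4 ^ s \<and> qsign s a = \<sigma>}. u a p * u a q)
        = real (card {a. a < 4 ^ s \<and> qsign s a = \<sigma>}) / real m * (if p = q then 1 else 0)"
proof -
  define \<mu> :: real where "\<mu> = 3 * 2 ^ s / (2 * (2 ^ s - 1)) + 3 * 2 ^ s / (2 * (2 ^ s + 1))"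
  have "m > 0"
    using assms(2) power_increasing[OF assms(1), of "4 :: nat"] by simp
  have "\<mu> * real m = real (card {a. a < 4 ^ s \<and> qsign s a = 1}) + real (card {a. a < 4 ^ s \<and> qsign s a = -1})"
    using qsign_part_ratio[OF assms, of 1] qsign_part_ratio[OF assms, of "-1"] \<open>m > 0\<close>
    by (simp add: \<mu>_def distrib_right)
  also have "\<dots> = 4 ^ s"
    by (simp add: card_qsign_part add_divide_distrib[symmetric])
  finally have trace: "\<mu> * real m = 4 ^ s" .
  then have "\<mu> > 0"
    using \<open>m > 0\<close> zero_less_mult_iff[of \<mu> "real m"] by simp
  have square: "(\<Sum>c<4 ^ s. gram s a c * gram s c b) = \<mu> * gram s a b" if "a < 4 ^ s" "b < 4 ^ s" for a b
    using gram_square[OF assms(1) that] by (simp only: \<mu>_def)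
  have "(\<Sum>a<4 ^ s. gram s a a) = \<mu> * real m"
    using trace by simp
  then obtain u where gram: "\<And>a b. a < 4 ^ s \<Longrightarrow> b < 4 ^ s \<Longrightarrow> ip m (u a) (u b) = gram s a b"
    and weighted: "\<And>w \<nu> p q. (\<And>a b. a < 4 ^ s \<Longrightarrow> b < 4 ^ s \<Longrightarrow>
        (\<Sum>c<4 ^ s. gram s a c * w c * gram s c b) = \<nu> * gram s a b) \<Longrightarrow>
      p < m \<Longrightarrow> q < m \<Longrightarrow> (\<Sum>a<4 ^ s. w a * u a p * u a q) = \<nu> * (if p = q then 1 else 0)"
    using gram_realization[of "4 ^ s" "gram s" \<mu> m] gram_commute square \<open>\<mu> > 0\<close> by blast
  show thesis
  proof (rule that[OF gram])
    fix \<sigma> :: real and p q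
    assume \<sigma>: "\<sigma> = 1 \<or> \<sigma> = -1" and "p < m" "q < m"
    then show "(\<Sum>a\<in>{a. a < 4 ^ s \<and> qsign s a = \<sigma>}. u a p * u a q)
        = real (card {a. a < 4 ^ s \<and> qsign s a = \<sigma>}) / real m * (if p = q then 1 else 0)"
      using weighted[of "\<lambda>c. if qsign s c = \<sigma> then 1 else 0" "3 * 2 ^ s / (2 * (2 ^ s - \<sigma>))" p q]
        gram_weighted_square[OF assms(1) \<sigma>] qsign_part_ratio[OF assms \<sigma>]
      by (simp add: sum_qsign_part mult.assoc)
  qed
qed

lemma qsign_part_frames:
  assumes "s \<ge> 1" and "3 * m + 1 = 4 ^ s"
  obtains u where "\<And>\<sigma> f k. \<sigma> = 1 \<or> \<sigma> = -1 \<Longrightarrow> bij_betw f {..<k} {a. a < 4 ^ s \<and> qsign s a = \<sigma>} \<Longrightarrow>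
      is_ETF m k (\<lambda>i. u (f i))"
    and "\<And>a b. a < 4 ^ s \<Longrightarrow> b < 4 ^ s \<Longrightarrow> qsign s a \<noteq> qsign s b \<Longrightarrow>
      \<bar>ip m (u a) (u b)\<bar> = \<bar>kappa (2 ^ s) (-1) 1\<bar>"
proof -
  obtain u where gram: "\<And>a b. a < 4 ^ s \<Longrightarrow> b < 4 ^ s \<Longrightarrow> ip m (u a) (u b) = gram s a b"
    and tight: "\<And>\<sigma> p q. \<sigma> = 1 \<or> \<sigma> = -1 \<Longrightarrow> p < m \<Longrightarrow> q < m \<Longrightarrow>
      (\<Sum>a\<in>{a. a < 4 ^ s \<and> qsign s a = \<sigma>}. u a p * u a q)
        = real (card {a. a < 4 ^ s \<and> qsign s a = \<sigma>}) / real m * (if p = q then 1 else 0)"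
    by (rule qsign_gram_realization[OF assms]) (rule that)
  show thesis
  proof (rule that)
    fix \<sigma> :: real and f and k :: nat
    assume \<sigma>: "\<sigma> = 1 \<or> \<sigma> = -1" and f: "bij_betw f {..<k} {a. a < 4 ^ s \<and> qsign s a = \<sigma>}"
    then have "card {a. a < 4 ^ s \<and> qsign s a = \<sigma>} = k"
      by (simp add: bij_betw_same_card[symmetric])
    then show "is_ETF m k (\<lambda>i. u (f i))"
      using tight[OF \<sigma>]
      by (intro is_ETF_reindex[OF f, where c = "\<bar>kappa (2 ^ s) \<sigma> \<sigma>\<bar>"]) (auto simp: gram abs_gram)
  next
    fix a b
    assume "a < 4 ^ s" "b < 4 ^ s" "qsign s a \<noteq> qsign s b"
    moreover from this have "a \<noteq> b"
      by auto
    ultimately show "\<bar>ip m (u a) (u b)\<bar> = \<bar>kappa (2 ^ s) (-1) 1\<bar>"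
      by (simp add: gram abs_gram kappa_def)
  qed
qed

theorem theorem4:
  fixes s :: nat
  assumes "s \<ge> 2"
  shows "\<exists>v w. mutually_unbiased ((2^(2*s) - 1) div 3)
                  (2^(s-1) * (2^s - 1)) v (2^(s-1) * (2^s + 1)) w"
proof -
  define m k l :: nat where "m = (2 ^ (2 * s) - 1) div 3"
    and "k = 2 ^ (s - 1) * (2 ^ s - 1)" and "l = 2 ^ (s - 1) * (2 ^ s + 1)"
  let ?V = "{a. a < 4 ^ s \<and> qsign s a = -1}" and ?W = "{a. a < 4 ^ s \<and> qsign s a = 1}"
  have "s \<ge> 1"
    using assms by simp
  have "3 * m + 1 = 4 ^ s"
    unfolding m_def by (rule three_mul_div_three_add_one)
  then obtain u where frames: "\<And>\<sigma> f n. \<sigma> = 1 \<or> \<sigma> = -1 \<Longrightarrow>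
      bij_betw f {..<n} {a. a < 4 ^ s \<and> qsign s a = \<sigma>} \<Longrightarrow> is_ETF m n (\<lambda>i. u (f i))"
    and unbiased: "\<And>a b. a < 4 ^ s \<Longrightarrow> b < 4 ^ s \<Longrightarrow> qsign s a \<noteq> qsign s b \<Longrightarrow>
      \<bar>ip m (u a) (u b)\<bar> = \<bar>kappa (2 ^ s) (-1) 1\<bar>"
    using qsign_part_frames[OF \<open>s \<ge> 1\<close>] by blast
  have "card ?V = k" "card ?W = l"
    unfolding k_def l_def using \<open>s \<ge> 1\<close> by (rule card_qsign_parts)+
  then obtain f g where f: "bij_betw f {..<k} ?V" and g: "bij_betw g {..<l} ?W"
    using ex_bij_betw_nat_finite[of ?V] ex_bij_betw_nat_finite[of ?W] by (auto simp: atLeast0LessThan)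
  have "\<bar>ip m (u (f i)) (u (g j))\<bar> = \<bar>kappa (2 ^ s) (-1) 1\<bar>" if "i < k" "j < l" for i j
    using bij_betwE[OF f] bij_betwE[OF g] that by (auto intro: unbiased)
  then show ?thesis
    using frames[OF _ f] frames[OF _ g] unfolding mutually_unbiased_def m_def k_def l_def by blast
qed

end
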